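(* Let $n\ge 4$ and let $s_1=(1,2)$, $s_3=(3,4)\in S_n$. A real representation $\pi$ of $S_n$ is spinorial if and only if its restrictions to the cyclic subgroups $\langle s_1\rangle$ and $\langle s_1s_3\rangle$ are both spinorial.
   Context: A real representation of a finite group $G$ on a Euclidean space $V$ is regarded as a homomorphism $\pi:G\to\mathrm{O}(V)$. $\mathrm{Pin}(V)$ is the Pin group of $V$ (from the Clifford algebra with $v^2=-|v|^2$) with standard double cover $\rho:\mathrm{Pin}(V)\to\mathrm{O}(V)$, kernel $\{\pm1\}$. $\pi$ is spinorial if there is a homomorphism $\hat\pi:G\to\mathrm{Pin}(V)$ with $\rho\circ\hat\pi=\pi$. *)

theory Defs
  imports "HOL-Analysis.Analysis" "HOL-Algebra.Sym_Groups" "HOL-Algebra.Generated_Groups"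
          "HOL-Combinatorics.Transposition"
begin

text \<open>Euclidean space V = (real,'d) vec with standard orthonormal basis e_i (i :: 'd),
  the index type carrying a linear order used to order basis blades.
  Clifford algebra Cl(V) with v*v = -|v|^2: elements are coefficient functions
  on the blades e_I (I a subset of the index type), with
  e_I e_J = (-1)^(inv(I,J) + card(I \<inter> J)) e_(I symmetric-difference J).\<close>

type_synonym 'd cliff = "'d set \<Rightarrow> real"

definition cl_sign :: "'d::{finite,linorder} set \<Rightarrow> 'd set \<Rightarrow> real" where
  "cl_sign I J = (-1) ^ (card {(i, j). i \<in> I \<and> j \<in> J \<and> j < i} + card (I \<inter> J))"

definition symdiff :: "'a set \<Rightarrow> 'a set \<Rightarrow> 'a set" where
  "symdiff I K = (I - K) \<union> (K - I)"

definition cl_mult :: "'d::{finite,linorder} cliff \<Rightarrow> 'd cliff \<Rightarrow> 'd cliff" where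
  "cl_mult x y = (\<lambda>K. \<Sum>I\<in>UNIV. cl_sign I (symdiff I K) * x I * y (symdiff I K))"

definition cl_one :: "'d cliff" where
  "cl_one = (\<lambda>I. if I = {} then 1 else 0)"

definition vec_cl :: "(real,'d::finite) vec \<Rightarrow> 'd cliff" where
  "vec_cl v = (\<lambda>I. if \<exists>i. I = {i} then v $ (THE i. I = {i}) else 0)"

definition grade_inv :: "'d::finite cliff \<Rightarrow> 'd cliff" where
  "grade_inv x = (\<lambda>I. (-1) ^ card I * x I)"

definition cl_inv :: "'d::{finite,linorder} cliff \<Rightarrow> 'd cliff" where
  "cl_inv x = (THE y. cl_mult x y = cl_one \<and> cl_mult y x = cl_one)"

definition Pin :: "'d::{finite,linorder} cliff set" where
  "Pin = {foldr cl_mult (map vec_cl us) cl_one | us. \<forall>u\<in>set us. norm u = 1}"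

definition pin_rho :: "('d::{finite,linorder}) cliff \<Rightarrow> (real,'d) vec \<Rightarrow> (real,'d) vec" where
  "pin_rho x v = (\<chi> i. cl_mult (cl_mult (grade_inv x) (vec_cl v)) (cl_inv x) {i})"

definition real_rep :: "('g, 'b) monoid_scheme \<Rightarrow> ('g \<Rightarrow> (real,'d::finite) vec \<Rightarrow> (real,'d) vec) \<Rightarrow> bool" where
  "real_rep G \<pi> \<longleftrightarrow> (\<forall>g\<in>carrier G. orthogonal_transformation (\<pi> g)) \<and>
     (\<forall>g\<in>carrier G. \<forall>h\<in>carrier G. \<pi> (g \<otimes>\<^bsub>G\<^esub> h) = \<pi> g \<circ> \<pi> h)"

definition spinorial :: "('g, 'b) monoid_scheme \<Rightarrow> ('g \<Rightarrow> (real, 'd::{finite,linorder}) vec \<Rightarrow> (real,'d) vec) \<Rightarrow> bool" where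
  "spinorial G \<pi> \<longleftrightarrow> (\<exists>\<pi>h :: 'g \<Rightarrow> 'd cliff.
     (\<forall>g\<in>carrier G. \<pi>h g \<in> Pin) \<and>
     (\<forall>g\<in>carrier G. \<forall>h\<in>carrier G. \<pi>h (g \<otimes>\<^bsub>G\<^esub> h) = cl_mult (\<pi>h g) (\<pi>h h)) \<and>
     (\<forall>g\<in>carrier G. pin_rho (\<pi>h g) = \<pi> g))"

end

theory Submission
  imports Defs
begin

text \<open>Restriction gives one direction. Conversely, an orthogonal involution is the product of the
  reflections in an orthonormal basis of its \<open>-1\<close>-eigenspace, so every \<open>\<pi>(g)\<close> lifts to \<open>Pin(V)\<close>,
  and the kernel of \<open>\<rho>\<close> is \<open>{1, -1}\<close>. Spinoriality of \<open>\<langle>s\<^sub>1\<rangle>\<close> and \<open>\<langle>s\<^sub>1s\<^sub>3\<rangle>\<close> provides lifts of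
  \<open>\<pi>(s\<^sub>1)\<close> and \<open>\<pi>(s\<^sub>1s\<^sub>3)\<close> squaring to \<open>1\<close>. Conjugating them gives lifts \<open>X\<^sub>k\<close> of \<open>\<pi>(s\<^sub>k)\<close>,
  \<open>s\<^sub>k = (k k+1)\<close>, with \<open>X\<^sub>k\<^sup>2 = 1\<close> and \<open>(X\<^sub>iX\<^sub>j)\<^sup>2 = 1\<close> for \<open>|i - j| \<ge> 2\<close>, and the signs of the \<open>X\<^sub>k\<close> can be
  chosen so that \<open>(X\<^sub>kX\<^sub>k\<^sub>+\<^sub>1)\<^sup>3 = 1\<close>. So the pairs \<open>(s\<^sub>k, X\<^sub>k)\<close> satisfy the Coxeter relations of \<open>S\<^sub>n\<close>.
  The monoid they generate has at most \<open>n!\<close> elements, by a coset count valid in any monoid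
  satisfying these relations, yet it projects onto \<open>S\<^sub>n\<close>; hence it is the graph of a homomorphism
  \<open>S\<^sub>n \<rightarrow> Pin(V)\<close> lifting \<open>\<pi>\<close>.\<close>

section \<open>The Clifford algebra\<close>

notation cl_mult (infixl "\<star>" 70)

lemma minus_one_power_card_symdiff:
  assumes "finite X" "finite Y"
  shows "(-1::real) ^ card (symdiff X Y) = (-1) ^ card X * (-1) ^ card Y"
proof -
  have card_symdiff: "card (symdiff X Y) = card (X - Y) + card (Y - X)"
    unfolding symdiff_def using assms by (intro card_Un_disjoint) auto
  have "card X = card (X - Y) + card (X \<inter> Y)"
    using card_Int_Diff[OF assms(1), of Y] by simp
  moreover have "card Y = card (Y - X) + card (X \<inter> Y)"
    using card_Int_Diff[OF assms(2), of X] by (simp add: Int_commute)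
  ultimately have "(-1::real) ^ card X * (-1) ^ card Y = (-1) ^ card (X - Y) * (-1) ^ card (Y - X)"
    by (simp add: power_add mult_ac)
  then show ?thesis
    by (simp add: card_symdiff power_add)
qed

lemma symdiff_commute: "symdiff A B = symdiff B A"
  by (auto simp: symdiff_def)

lemma symdiff_self [simp]: "symdiff A A = {}"
  by (auto simp: symdiff_def)

lemma symdiff_empty [simp]: "symdiff A {} = A" "symdiff {} A = A"
  by (auto simp: symdiff_def)

lemma symdiff_cancel [simp]: "symdiff A (symdiff A B) = B" "symdiff (symdiff B A) A = B"
  by (auto simp: symdiff_def)

definition cl_inversions :: "'d::linorder set \<Rightarrow> 'd set \<Rightarrow> ('d \<times> 'd) set" where
  "cl_inversions I J = {(i, j). i \<in> I \<and> j \<in> J \<and> j < i}"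

lemma cl_sign_eq: "cl_sign I J = (-1) ^ card (cl_inversions I J) * (-1) ^ card (I \<inter> J)"
  unfolding cl_sign_def cl_inversions_def by (simp add: power_add)

lemma cl_sign_symdiff_left:
  fixes A B J :: "'d::{finite,linorder} set"
  shows "cl_sign (symdiff A B) J = cl_sign A J * cl_sign B J"
proof -
  have "cl_inversions (symdiff A B) J = symdiff (cl_inversions A J) (cl_inversions B J)"
    and "symdiff A B \<inter> J = symdiff (A \<inter> J) (B \<inter> J)"
    by (auto simp: cl_inversions_def symdiff_def)
  then show ?thesis
    by (simp add: cl_sign_eq minus_one_power_card_symdiff)
qed

lemma cl_sign_symdiff_right:
  fixes A B J :: "'d::{finite,linorder} set"
  shows "cl_sign J (symdiff A B) = cl_sign J A * cl_sign J B"
proof -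
  have "cl_inversions J (symdiff A B) = symdiff (cl_inversions J A) (cl_inversions J B)"
    and "J \<inter> symdiff A B = symdiff (J \<inter> A) (J \<inter> B)"
    by (auto simp: cl_inversions_def symdiff_def)
  then show ?thesis
    by (simp add: cl_sign_eq minus_one_power_card_symdiff)
qed

lemma cl_sign_empty [simp]: "cl_sign {} J = 1" "cl_sign J {} = 1"
  by (auto simp: cl_sign_def)

lemma cl_sign_square [simp]: "cl_sign I J * cl_sign I J = 1"
  by (simp add: cl_sign_def flip: power_add)

lemma cl_sign_singleton_self [simp]: "cl_sign {i} {i} = -1"
proof -
  have "cl_inversions {i} {i} = {}" by (auto simp: cl_inversions_def)
  then show ?thesis by (simp add: cl_sign_eq)
qed

lemma cl_sign_singleton_swap:
  fixes J :: "'d::{finite,linorder} set"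
  shows "cl_sign {i} J * cl_sign J {i} = (-1) ^ card (J - {i})"
proof -
  have below: "card (cl_inversions {i} J) = card {j\<in>J. j < i}"
    by (rule bij_betw_same_card[of snd])
       (auto simp: bij_betw_def inj_on_def cl_inversions_def image_def)
  have above: "card (cl_inversions J {i}) = card {j\<in>J. i < j}"
    by (rule bij_betw_same_card[of fst])
       (auto simp: bij_betw_def inj_on_def cl_inversions_def image_def)
  have J_split: "J - {i} = {j\<in>J. j < i} \<union> {j\<in>J. i < j}" by auto
  have split: "card (J - {i}) = card {j\<in>J. j < i} + card {j\<in>J. i < j}"
    unfolding J_split by (rule card_Un_disjoint) auto
  have "cl_sign {i} J * cl_sign J {i} =
      (-1) ^ (card (cl_inversions {i} J) + card (cl_inversions J {i})) * ((-1) ^ card ({i} \<inter> J))\<^sup>2"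
    by (simp add: cl_sign_eq power_add power2_eq_square Int_commute mult_ac)
  also have "\<dots> = (-1) ^ card (J - {i})"
    by (simp add: below above split power2_eq_square)
  finally show ?thesis .
qed

lemma cl_sign_singletons_anticommute:
  fixes i j :: "'d::{finite,linorder}"
  shows "cl_sign {i} {j} + cl_sign {j} {i} = (if i = j then -2 else 0)"
proof (cases "i = j")
  case False
  then have anti: "cl_sign {i} {j} * cl_sign {j} {i} = -1"
    using cl_sign_singleton_swap[of i "{j}"] by simp
  have "cl_sign {j} {i} = cl_sign {i} {j} * (cl_sign {i} {j} * cl_sign {j} {i})"
    by (simp add: mult.assoc[symmetric])
  also have "\<dots> = - cl_sign {i} {j}"
    by (simp add: anti)
  finally show ?thesis using False by simp
qed simp

lemma sum_reindex_symdiff: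
  fixes f :: "'d::finite set \<Rightarrow> real"
  shows "(\<Sum>I\<in>UNIV. f I) = (\<Sum>L\<in>UNIV. f (symdiff J L))"
  by (rule sum.reindex_bij_witness[of _ "symdiff J" "symdiff J"]) auto

lemma cl_mult_apply:
  "(x \<star> y) K = (\<Sum>I\<in>UNIV. cl_sign I (symdiff I K) * x I * y (symdiff I K))"
  by (simp add: cl_mult_def)

lemma cl_mult_assoc: "(x \<star> y) \<star> z = x \<star> (y \<star> z)"
proof (rule ext)
  fix K
  have "((x \<star> y) \<star> z) K = (\<Sum>I\<in>UNIV. \<Sum>J\<in>UNIV. cl_sign I (symdiff I K) *
      (cl_sign J (symdiff J I) * x J * y (symdiff J I)) * z (symdiff I K))"
    by (simp add: cl_mult_apply sum_distrib_left sum_distrib_right)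
  also have "\<dots> = (\<Sum>J\<in>UNIV. \<Sum>I\<in>UNIV. cl_sign I (symdiff I K) *
      (cl_sign J (symdiff J I) * x J * y (symdiff J I)) * z (symdiff I K))"
    by (rule sum.swap)
  also have "\<dots> = (\<Sum>J\<in>UNIV. \<Sum>L\<in>UNIV. cl_sign (symdiff J L) (symdiff (symdiff J L) K) *
      (cl_sign J L * x J * y L) * z (symdiff (symdiff J L) K))"
  proof (rule sum.cong[OF refl])
    fix J
    show "(\<Sum>I\<in>UNIV. cl_sign I (symdiff I K) *
        (cl_sign J (symdiff J I) * x J * y (symdiff J I)) * z (symdiff I K)) =
      (\<Sum>L\<in>UNIV. cl_sign (symdiff J L) (symdiff (symdiff J L) K) *
        (cl_sign J L * x J * y L) * z (symdiff (symdiff J L) K))"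
      by (subst sum_reindex_symdiff[where J = J]) simp
  qed
  also have "\<dots> = (\<Sum>J\<in>UNIV. \<Sum>L\<in>UNIV. cl_sign J (symdiff J K) * x J *
      (cl_sign L (symdiff L (symdiff J K)) * y L * z (symdiff L (symdiff J K))))"
  proof (intro sum.cong refl)
    fix J L
    let ?M = "symdiff L (symdiff J K)"
    have "symdiff (symdiff J L) K = ?M"
      by (auto simp: symdiff_def)
    moreover have "cl_sign (symdiff J L) ?M * cl_sign J L = cl_sign J (symdiff J K) * cl_sign L ?M"
      by (simp add: cl_sign_symdiff_left cl_sign_symdiff_right)
    ultimately show "cl_sign (symdiff J L) (symdiff (symdiff J L) K) *
        (cl_sign J L * x J * y L) * z (symdiff (symdiff J L) K) =
      cl_sign J (symdiff J K) * x J * (cl_sign L ?M * y L * z ?M)"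
      by (simp only: mult.assoc[symmetric]) (simp only: mult.commute mult.left_commute)
  qed
  also have "\<dots> = (x \<star> (y \<star> z)) K"
    by (simp add: cl_mult_apply sum_distrib_left)
  finally show "((x \<star> y) \<star> z) K = (x \<star> (y \<star> z)) K" .
qed

lemma cl_mult_one_left [simp]:
  fixes x :: "'d::{finite,linorder} cliff"
  shows "cl_one \<star> x = x"
proof (rule ext)
  fix K
  have "(cl_one \<star> x) K = (\<Sum>I\<in>UNIV. if I = ({}::'d set) then x K else 0)"
    unfolding cl_mult_apply cl_one_def by (intro sum.cong refl) auto
  then show "(cl_one \<star> x) K = x K" by simp
qed

lemma cl_mult_one_right [simp]: "x \<star> cl_one = x"
proof (rule ext)
  fix K
  have "(x \<star> cl_one) K = (\<Sum>I\<in>UNIV. if I = K then x K else 0)"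
    unfolding cl_mult_apply cl_one_def by (rule sum.cong) (auto simp: symdiff_def)
  then show "(x \<star> cl_one) K = x K" by simp
qed

definition cl_scale :: "real \<Rightarrow> 'd cliff \<Rightarrow> 'd cliff" where
  "cl_scale a x = (\<lambda>I. a * x I)"

definition cl_add :: "'d cliff \<Rightarrow> 'd cliff \<Rightarrow> 'd cliff" where
  "cl_add x y = (\<lambda>I. x I + y I)"

lemma cl_scale_mult_left: "cl_scale a x \<star> y = cl_scale a (x \<star> y)"
  by (rule ext) (simp add: cl_mult_apply cl_scale_def sum_distrib_left mult_ac)

lemma cl_scale_mult_right: "x \<star> cl_scale a y = cl_scale a (x \<star> y)"
  by (rule ext) (simp add: cl_mult_apply cl_scale_def sum_distrib_left mult_ac)

lemma cl_add_mult_left: "cl_add x y \<star> z = cl_add (x \<star> z) (y \<star> z)"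
  by (rule ext) (simp add: cl_mult_apply cl_add_def sum.distrib algebra_simps)

lemma cl_scale_scale [simp]: "cl_scale a (cl_scale b x) = cl_scale (a * b) x"
  by (simp add: cl_scale_def fun_eq_iff)

lemma cl_scale_one [simp]: "cl_scale 1 x = x"
  by (simp add: cl_scale_def)

lemma cl_mult_cancel_left: "a \<star> a = cl_one \<Longrightarrow> a \<star> (a \<star> z) = z"
  by (metis cl_mult_assoc cl_mult_one_left)

lemma cl_scale_minus_one_square: "cl_scale (-1) b \<star> cl_scale (-1) b = b \<star> b"
  by (simp add: cl_scale_mult_left cl_scale_mult_right)

section \<open>Vectors in the Clifford algebra\<close>

lemma vec_cl_apply: "vec_cl v I = (\<Sum>i\<in>UNIV. if I = {i} then v $ i else 0)"
proof (cases "\<exists>i. I = {i}")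
  case True
  then obtain i where "I = {i}" by blast
  then have "(\<Sum>j\<in>UNIV. if I = {j} then v $ j else 0) = (\<Sum>j\<in>UNIV. if j = i then v $ i else 0)"
    by (intro sum.cong) auto
  then show ?thesis by (simp add: vec_cl_def \<open>I = {i}\<close>)
qed (simp add: vec_cl_def)

lemma vec_cl_singleton [simp]: "vec_cl v {i} = v $ i"
  by (simp add: vec_cl_def)

lemma vec_cl_mult_apply:
  "(vec_cl v \<star> y) K = (\<Sum>i\<in>UNIV. v $ i * cl_sign {i} (symdiff {i} K) * y (symdiff {i} K))"
proof -
  have "(vec_cl v \<star> y) K = (\<Sum>I\<in>UNIV. \<Sum>i\<in>UNIV.
      if I = {i} then cl_sign I (symdiff I K) * v $ i * y (symdiff I K) else 0)"
    unfolding cl_mult_apply vec_cl_apply sum_distrib_left sum_distrib_right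
    by (intro sum.cong refl) auto
  also have "\<dots> = (\<Sum>i\<in>UNIV. \<Sum>I\<in>UNIV.
      if I = {i} then cl_sign I (symdiff I K) * v $ i * y (symdiff I K) else 0)"
    by (rule sum.swap)
  finally show ?thesis by (simp add: mult_ac)
qed

lemma mult_vec_cl_apply:
  "(y \<star> vec_cl v) K = (\<Sum>i\<in>UNIV. cl_sign (symdiff K {i}) {i} * y (symdiff K {i}) * v $ i)"
proof -
  have swap: "symdiff I K = {i} \<longleftrightarrow> I = symdiff K {i}" for I i
    by (auto simp: symdiff_def)
  have "(y \<star> vec_cl v) K = (\<Sum>I\<in>UNIV. \<Sum>i\<in>UNIV.
      if I = symdiff K {i} then cl_sign I {i} * y I * v $ i else 0)"
    unfolding cl_mult_apply vec_cl_apply sum_distrib_left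
  proof (intro sum.cong refl)
    fix I i
    show "cl_sign I (symdiff I K) * y I * (if symdiff I K = {i} then v $ i else 0) =
        (if I = symdiff K {i} then cl_sign I {i} * y I * v $ i else 0)"
      using swap[of I i] by auto
  qed
  also have "\<dots> = (\<Sum>i\<in>UNIV. \<Sum>I\<in>UNIV.
      if I = symdiff K {i} then cl_sign I {i} * y I * v $ i else 0)"
    by (rule sum.swap)
  finally show ?thesis by simp
qed

lemma vec_cl_mult_vec_cl_apply:
  "(vec_cl u \<star> vec_cl v) K =
    (\<Sum>i\<in>UNIV. \<Sum>j\<in>UNIV. if K = symdiff {i} {j} then u $ i * v $ j * cl_sign {i} {j} else 0)"
proof -
  have swap: "symdiff {i} K = {j} \<longleftrightarrow> K = symdiff {i} {j}" for i j
    by (auto simp: symdiff_def)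
  show ?thesis
    unfolding vec_cl_mult_apply vec_cl_apply sum_distrib_left
    by (intro sum.cong refl) (auto simp: swap)
qed

lemma vec_cl_anticommute:
  "cl_add (vec_cl u \<star> vec_cl v) (vec_cl v \<star> vec_cl u) = cl_scale (-2 * (u \<bullet> v)) cl_one"
proof (rule ext)
  fix K :: "'a set"
  have "(vec_cl v \<star> vec_cl u) K =
      (\<Sum>j\<in>UNIV. \<Sum>i\<in>UNIV. if K = symdiff {j} {i} then v $ j * u $ i * cl_sign {j} {i} else 0)"
    by (rule vec_cl_mult_vec_cl_apply)
  also have "\<dots> =
      (\<Sum>i\<in>UNIV. \<Sum>j\<in>UNIV. if K = symdiff {j} {i} then v $ j * u $ i * cl_sign {j} {i} else 0)"
    by (rule sum.swap)
  also have "\<dots> =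
      (\<Sum>i\<in>UNIV. \<Sum>j\<in>UNIV. if K = symdiff {i} {j} then u $ i * v $ j * cl_sign {j} {i} else 0)"
    by (intro sum.cong refl) (simp add: symdiff_commute mult.commute)
  finally have swapped: "(vec_cl v \<star> vec_cl u) K = \<dots>" .
  have "cl_add (vec_cl u \<star> vec_cl v) (vec_cl v \<star> vec_cl u) K =
      (\<Sum>i\<in>UNIV. \<Sum>j\<in>UNIV. if K = symdiff {i} {j} then u $ i * v $ j * cl_sign {i} {j} else 0) +
      (\<Sum>i\<in>UNIV. \<Sum>j\<in>UNIV. if K = symdiff {i} {j} then u $ i * v $ j * cl_sign {j} {i} else 0)"
    by (simp only: cl_add_def swapped) (simp only: vec_cl_mult_vec_cl_apply)
  also have "\<dots> = (\<Sum>i\<in>UNIV. \<Sum>j\<in>UNIV. if K = symdiff {i} {j}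
         then u $ i * v $ j * (cl_sign {i} {j} + cl_sign {j} {i}) else 0)"
    by (simp only: sum.distrib[symmetric]) (intro sum.cong refl, auto simp: algebra_simps)
  also have "\<dots> = (\<Sum>i\<in>UNIV. \<Sum>j\<in>UNIV. if j = i then (if K = {} then -2 * (u $ i * v $ i) else 0) else 0)"
    by (intro sum.cong refl) (auto simp: cl_sign_singletons_anticommute)
  also have "\<dots> = cl_scale (-2 * (u \<bullet> v)) cl_one K"
    by (simp add: cl_scale_def cl_one_def inner_vec_def sum_distrib_left)
  finally show "cl_add (vec_cl u \<star> vec_cl v) (vec_cl v \<star> vec_cl u) K = cl_scale (-2 * (u \<bullet> v)) cl_one K" .
qed

lemma vec_cl_square: "vec_cl u \<star> vec_cl u = cl_scale (- (u \<bullet> u)) cl_one"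
proof (rule ext)
  fix K
  show "(vec_cl u \<star> vec_cl u) K = cl_scale (- (u \<bullet> u)) cl_one K"
    using fun_cong[OF vec_cl_anticommute[of u u], of K] by (simp add: cl_add_def cl_scale_def)
qed

lemma vec_cl_scaleR: "vec_cl (c *\<^sub>R a) = cl_scale c (vec_cl a)"
  by (rule ext) (simp add: vec_cl_def cl_scale_def)

lemma vec_cl_diff: "vec_cl (a - b) = cl_add (vec_cl a) (cl_scale (-1) (vec_cl b))"
  by (rule ext) (simp add: vec_cl_def cl_scale_def cl_add_def)

definition reflect :: "(real,'d::finite) vec \<Rightarrow> (real,'d) vec \<Rightarrow> (real,'d) vec" where
  "reflect u w = w - (2 * (u \<bullet> w)) *\<^sub>R u"

lemma reflect_reflect: "norm u = 1 \<Longrightarrow> reflect u (reflect u w) = w"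
  by (simp add: reflect_def inner_diff_right algebra_simps norm_eq_1)

lemma vec_cl_conj_unit:
  assumes "norm u = 1"
  shows "vec_cl u \<star> vec_cl w \<star> vec_cl u = vec_cl (reflect u w)"
proof -
  have "vec_cl u \<star> vec_cl w = cl_add (cl_scale (-1) (vec_cl w \<star> vec_cl u)) (cl_scale (-2 * (u \<bullet> w)) cl_one)"
  proof (rule ext)
    fix K
    show "(vec_cl u \<star> vec_cl w) K = cl_add (cl_scale (-1) (vec_cl w \<star> vec_cl u)) (cl_scale (-2 * (u \<bullet> w)) cl_one) K"
      using fun_cong[OF vec_cl_anticommute[of u w], of K] by (simp add: cl_add_def cl_scale_def)
  qed
  then have "vec_cl u \<star> vec_cl w \<star> vec_cl u =
      cl_add (cl_scale (-1) (vec_cl w \<star> (vec_cl u \<star> vec_cl u))) (cl_scale (-2 * (u \<bullet> w)) (vec_cl u))"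
    by (simp add: cl_add_mult_left cl_scale_mult_left cl_mult_assoc)
  also have "\<dots> = vec_cl (reflect u w)"
    using assms by (simp add: vec_cl_square norm_eq_1 cl_scale_mult_right reflect_def vec_cl_diff vec_cl_scaleR)
  finally show ?thesis .
qed

section \<open>The Pin group and the twisted adjoint action\<close>

definition vec_prod :: "(real,'d::{finite,linorder}) vec list \<Rightarrow> 'd cliff" where
  "vec_prod us = foldr cl_mult (map vec_cl us) cl_one"

lemma vec_prod_simps [simp]:
  "vec_prod [] = cl_one" "vec_prod (u # us) = vec_cl u \<star> vec_prod us"
  by (simp_all add: vec_prod_def)

lemma vec_prod_append: "vec_prod (us @ ws) = vec_prod us \<star> vec_prod ws"
  by (induct us) (simp_all add: cl_mult_assoc)

lemma Pin_iff: "x \<in> Pin \<longleftrightarrow> (\<exists>us. (\<forall>u\<in>set us. norm u = 1) \<and> x = vec_prod us)"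
  by (auto simp: Pin_def vec_prod_def)

lemma vec_prod_mult_rev:
  assumes "\<forall>u\<in>set us. norm u = 1"
  shows "vec_prod us \<star> vec_prod (rev us) = cl_scale ((-1) ^ length us) cl_one"
  using assms
proof (induct us)
  case (Cons u us)
  have "vec_prod (u # us) \<star> vec_prod (rev (u # us)) = vec_cl u \<star> (vec_prod us \<star> vec_prod (rev us)) \<star> vec_cl u"
    by (simp add: vec_prod_append cl_mult_assoc)
  also have "\<dots> = cl_scale ((-1) ^ length us) (vec_cl u \<star> vec_cl u)"
    using Cons by (simp add: cl_scale_mult_right cl_scale_mult_left)
  also have "\<dots> = cl_scale ((-1) ^ length (u # us)) cl_one"
    using Cons.prems by (simp add: vec_cl_square norm_eq_1)
  finally show ?case .
qed simp

lemma rev_vec_prod_mult: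
  assumes "\<forall>u\<in>set us. norm u = 1"
  shows "vec_prod (rev us) \<star> vec_prod us = cl_scale ((-1) ^ length us) cl_one"
  using vec_prod_mult_rev[of "rev us"] assms by simp

lemma cl_inv_eqI:
  assumes "x \<star> y = cl_one" "y \<star> x = cl_one"
  shows "cl_inv x = y"
  unfolding cl_inv_def
proof (rule the_equality)
  fix y' assume y': "x \<star> y' = cl_one \<and> y' \<star> x = cl_one"
  have "y' = (y \<star> x) \<star> y'" using assms by simp
  also have "\<dots> = y \<star> (x \<star> y')" by (rule cl_mult_assoc)
  finally show "y' = y" using y' by simp
qed (use assms in simp)

lemma cl_inv_vec_prod:
  assumes "\<forall>u\<in>set us. norm u = 1"
  shows "cl_inv (vec_prod us) = cl_scale ((-1) ^ length us) (vec_prod (rev us))"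
  by (rule cl_inv_eqI)
     (simp_all add: cl_scale_mult_right cl_scale_mult_left vec_prod_mult_rev rev_vec_prod_mult assms
       flip: power_add)

lemma vec_prod_parity:
  assumes "vec_prod us I \<noteq> 0"
  shows "(-1::real) ^ card I = (-1) ^ length us"
  using assms
proof (induct us arbitrary: I)
  case Nil
  then show ?case by (simp add: cl_one_def split: if_splits)
next
  case (Cons u us)
  then have "(\<Sum>i\<in>UNIV. u $ i * cl_sign {i} (symdiff {i} I) * vec_prod us (symdiff {i} I)) \<noteq> 0"
    by (simp add: vec_cl_mult_apply)
  then obtain i where "vec_prod us (symdiff {i} I) \<noteq> 0"
    by (metis (no_types, lifting) mult_zero_right sum.neutral)
  then have "(-1::real) ^ card (symdiff {i} I) = (-1) ^ length us" by (rule Cons.hyps)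
  then show ?case by (simp add: minus_one_power_card_symdiff)
qed

lemma grade_inv_vec_prod: "grade_inv (vec_prod us) = cl_scale ((-1) ^ length us) (vec_prod us)"
proof (rule ext)
  fix I
  show "grade_inv (vec_prod us) I = cl_scale ((-1) ^ length us) (vec_prod us) I"
    using vec_prod_parity[of us I]
    by (cases "vec_prod us I = 0") (auto simp: grade_inv_def cl_scale_def)
qed

definition refl_prod :: "(real,'d::finite) vec list \<Rightarrow> (real,'d) vec \<Rightarrow> (real,'d) vec" where
  "refl_prod us = foldr (\<lambda>u f. reflect u \<circ> f) us id"

lemma refl_prod_simps [simp]: "refl_prod [] = id" "refl_prod (u # us) = reflect u \<circ> refl_prod us"
  by (simp_all add: refl_prod_def)

lemma refl_prod_append: "refl_prod (us @ ws) = refl_prod us \<circ> refl_prod ws"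
  by (induct us) auto

lemma vec_prod_conj:
  assumes "\<forall>u\<in>set us. norm u = 1"
  shows "vec_prod us \<star> vec_cl v \<star> vec_prod (rev us) = vec_cl (refl_prod us v)"
  using assms
proof (induct us)
  case (Cons u us)
  have "vec_prod (u # us) \<star> vec_cl v \<star> vec_prod (rev (u # us)) =
      vec_cl u \<star> (vec_prod us \<star> vec_cl v \<star> vec_prod (rev us)) \<star> vec_cl u"
    by (simp add: vec_prod_append cl_mult_assoc)
  then show ?case
    using Cons by (simp add: vec_cl_conj_unit)
qed simp

lemma pin_rho_vec_prod:
  assumes "\<forall>u\<in>set us. norm u = 1"
  shows "pin_rho (vec_prod us) = refl_prod us"
proof (rule ext)
  fix v
  have "grade_inv (vec_prod us) \<star> vec_cl v \<star> cl_inv (vec_prod us) = vec_cl (refl_prod us v)"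
    by (simp add: grade_inv_vec_prod cl_inv_vec_prod assms cl_scale_mult_left cl_scale_mult_right
        vec_prod_conj flip: power_add)
  then show "pin_rho (vec_prod us) v = refl_prod us v"
    by (simp add: pin_rho_def vec_eq_iff)
qed

lemma Pin_one: "cl_one \<in> Pin"
  by (auto simp: Pin_iff intro: exI[of _ "[]"])

lemma Pin_mult:
  assumes "x \<in> Pin" "y \<in> Pin"
  shows "x \<star> y \<in> Pin"
proof -
  obtain us ws where "\<forall>u\<in>set us. norm u = 1" "x = vec_prod us"
      and "\<forall>u\<in>set ws. norm u = 1" "y = vec_prod ws"
    using assms by (auto simp: Pin_iff)
  then show ?thesis
    unfolding Pin_iff by (intro exI[of _ "us @ ws"]) (auto simp: vec_prod_append)
qed

lemma pin_rho_mult: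
  assumes "x \<in> Pin" "y \<in> Pin"
  shows "pin_rho (x \<star> y) = pin_rho x \<circ> pin_rho y"
proof -
  obtain us ws where us: "\<forall>u\<in>set us. norm u = 1" "x = vec_prod us"
      and ws: "\<forall>u\<in>set ws. norm u = 1" "y = vec_prod ws"
    using assms by (auto simp: Pin_iff)
  have "\<forall>u\<in>set (us @ ws). norm u = 1" using us ws by auto
  then have "pin_rho (vec_prod (us @ ws)) = refl_prod (us @ ws)" by (rule pin_rho_vec_prod)
  then show ?thesis
    using us ws by (simp add: vec_prod_append refl_prod_append pin_rho_vec_prod)
qed

lemma pin_rho_one: "pin_rho cl_one = id"
  using pin_rho_vec_prod[of "[]"] by simp

lemma Pin_minus:
  fixes x :: "'d::{finite,linorder} cliff"
  assumes "x \<in> Pin"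
  shows "cl_scale (-1) x \<in> Pin" and "pin_rho (cl_scale (-1) x) = pin_rho x"
proof -
  obtain us where us: "\<forall>u\<in>set us. norm u = 1" "x = vec_prod us"
    using assms by (auto simp: Pin_iff)
  define e :: "(real,'d) vec" where "e = axis undefined 1"
  have e: "norm e = 1" by (simp add: e_def)
  have minus: "cl_scale (-1) x = vec_prod (e # e # us)"
    using e by (simp add: us cl_mult_assoc[symmetric] vec_cl_square cl_scale_mult_left norm_eq_1)
  have unit: "\<forall>u\<in>set (e # e # us). norm u = 1" using e us by simp
  then show "cl_scale (-1) x \<in> Pin" unfolding Pin_iff minus by blast
  have "pin_rho (cl_scale (-1) x) = refl_prod (e # e # us)"
    unfolding minus using unit by (rule pin_rho_vec_prod)
  also have "\<dots> = refl_prod us"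
    using e by (auto simp: reflect_reflect)
  also have "\<dots> = pin_rho x"
    using us by (simp add: pin_rho_vec_prod)
  finally show "pin_rho (cl_scale (-1) x) = pin_rho x" .
qed

lemma Pin_minus_one_power: "x \<in> Pin \<Longrightarrow> cl_scale ((-1) ^ k) x \<in> Pin"
proof (induct k)
  case (Suc k)
  then have "cl_scale (-1) (cl_scale ((-1) ^ k) x) \<in> Pin" by (intro Pin_minus)
  then show ?case by simp
qed simp

lemma Pin_inverse:
  assumes "x \<in> Pin"
  obtains y where "y \<in> Pin" "x \<star> y = cl_one" "y \<star> x = cl_one"
proof -
  obtain us where us: "\<forall>u\<in>set us. norm u = 1" "x = vec_prod us"
    using assms Pin_iff by blast
  let ?y = "cl_scale ((-1) ^ length us) (vec_prod (rev us))"
  have "?y \<in> Pin" by (rule Pin_minus_one_power) (auto simp: Pin_iff us intro: exI[of _ "rev us"])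
  moreover have "x \<star> ?y = cl_one" "?y \<star> x = cl_one"
    by (simp_all add: us cl_scale_mult_right cl_scale_mult_left vec_prod_mult_rev rev_vec_prod_mult
        flip: power_add)
  ultimately show ?thesis by (rule that)
qed

lemma Pin_idempotent:
  assumes "e \<in> Pin" "e \<star> e = e"
  shows "e = cl_one"
proof -
  obtain e' where e': "e \<star> e' = cl_one" using Pin_inverse[OF assms(1)] by blast
  have "e = e \<star> (e \<star> e')" using e' by simp
  also have "\<dots> = e \<star> e'" by (simp add: cl_mult_assoc[symmetric] assms(2))
  finally show ?thesis using e' by simp
qed

section \<open>The kernel of \<open>pin_rho\<close>\<close>

definition cl_sqnorm :: "'d::finite cliff \<Rightarrow> real" where
  "cl_sqnorm x = (\<Sum>K\<in>UNIV. (x K)\<^sup>2)"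

text \<open>The substitution \<open>K \<mapsto> {i,j} \<triangle> K\<close> flips the sign of every summand.\<close>

lemma vec_cl_mult_cross_term:
  fixes y :: "'d::{finite,linorder} cliff"
  assumes "i \<noteq> j"
  shows "(\<Sum>K\<in>UNIV. (cl_sign {i} (symdiff {i} K) * y (symdiff {i} K)) *
                     (cl_sign {j} (symdiff {j} K) * y (symdiff {j} K))) = 0"
    (is "(\<Sum>K\<in>UNIV. ?f K) = 0")
proof -
  define D where "D = symdiff {i} {j}"
  have flip: "?f (symdiff D K) = - ?f K" for K
  proof -
    have "symdiff {i} (symdiff D K) = symdiff {j} K" "symdiff {j} (symdiff D K) = symdiff {i} K"
      by (auto simp: D_def symdiff_def)
    moreover have "cl_sign {i} (symdiff {j} K) * cl_sign {j} (symdiff {i} K) =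
        - (cl_sign {i} (symdiff {i} K) * cl_sign {j} (symdiff {j} K))"
    proof -
      have "cl_sign {i} {j} * cl_sign {j} {i} = -1"
        using cl_sign_singleton_swap[of i "{j}"] assms by simp
      then show ?thesis
        by (simp add: cl_sign_symdiff_right) (simp add: algebra_simps)
    qed
    ultimately show ?thesis by (simp add: algebra_simps)
  qed
  have "(\<Sum>K\<in>UNIV. ?f K) = (\<Sum>K\<in>UNIV. ?f (symdiff D K))"
    by (rule sum_reindex_symdiff)
  also have "\<dots> = - (\<Sum>K\<in>UNIV. ?f K)"
    by (simp add: flip sum_negf)
  finally show ?thesis by simp
qed

lemma cl_sqnorm_vec_cl_mult:
  fixes u :: "(real,'d::{finite,linorder}) vec"
  shows "cl_sqnorm (vec_cl u \<star> y) = (u \<bullet> u) * cl_sqnorm y"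
proof -
  define b where "b i K = cl_sign {i} (symdiff {i} K) * y (symdiff {i} K)" for i K
  define a where "a i K = u $ i * cl_sign {i} (symdiff {i} K) * y (symdiff {i} K)" for i K
  have a: "a i K = u $ i * b i K" for i K
    by (simp add: a_def b_def mult.assoc)
  have products: "(\<Sum>K\<in>UNIV. a i K * a j K) = (if i = j then u $ i * u $ i * cl_sqnorm y else 0)"
    for i j
  proof (cases "i = j")
    case True
    have "(\<Sum>K\<in>UNIV. a i K * a i K) = u $ i * u $ i * (\<Sum>K\<in>UNIV. (y (symdiff {i} K))\<^sup>2)"
      by (simp add: a b_def sum_distrib_left power2_eq_square algebra_simps)
    also have "(\<Sum>K\<in>UNIV. (y (symdiff {i} K))\<^sup>2) = cl_sqnorm y"
      unfolding cl_sqnorm_def by (rule sum_reindex_symdiff[symmetric])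
    finally show ?thesis using True by simp
  next
    case False
    have "(\<Sum>K\<in>UNIV. a i K * a j K) = u $ i * u $ j * (\<Sum>K\<in>UNIV. b i K * b j K)"
      by (simp add: a sum_distrib_left algebra_simps)
    then show ?thesis
      using vec_cl_mult_cross_term[OF False, of y] False by (simp add: b_def)
  qed
  have "cl_sqnorm (vec_cl u \<star> y) = (\<Sum>K\<in>UNIV. \<Sum>i\<in>UNIV. \<Sum>j\<in>UNIV. a i K * a j K)"
    unfolding cl_sqnorm_def vec_cl_mult_apply a_def[symmetric] power2_eq_square sum_product ..
  also have "\<dots> = (\<Sum>i\<in>UNIV. \<Sum>K\<in>UNIV. \<Sum>j\<in>UNIV. a i K * a j K)"
    by (rule sum.swap)
  also have "\<dots> = (\<Sum>i\<in>UNIV. \<Sum>j\<in>UNIV. \<Sum>K\<in>UNIV. a i K * a j K)"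
    by (rule sum.cong[OF refl], rule sum.swap)
  also have "\<dots> = (u \<bullet> u) * cl_sqnorm y"
    by (simp add: products inner_vec_def sum_distrib_right)
  finally show ?thesis .
qed

lemma cl_sqnorm_vec_prod:
  fixes us :: "(real,'d::{finite,linorder}) vec list"
  shows "\<forall>u\<in>set us. norm u = 1 \<Longrightarrow> cl_sqnorm (vec_prod us) = 1"
proof (induct us)
  case Nil
  have "cl_sqnorm (cl_one :: 'd cliff) = (\<Sum>K\<in>UNIV. if K = ({}::'d set) then 1 else 0)"
    unfolding cl_sqnorm_def cl_one_def by (intro sum.cong refl) auto
  then show ?case by simp
next
  case (Cons u us)
  then show ?case by (simp add: cl_sqnorm_vec_cl_mult norm_eq_1[symmetric])
qed

lemma cl_sqnorm_scale_one: "cl_sqnorm (cl_scale c (cl_one :: 'd::finite cliff)) = c\<^sup>2"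
proof -
  have "cl_sqnorm (cl_scale c (cl_one :: 'd cliff)) = (\<Sum>K\<in>UNIV. if K = ({}::'d set) then c\<^sup>2 else 0)"
    unfolding cl_sqnorm_def cl_one_def cl_scale_def by (intro sum.cong refl) auto
  then show ?thesis by simp
qed

lemma vec_prod_commute_vec_cl:
  assumes "\<forall>u\<in>set us. norm u = 1" "refl_prod us = id"
  shows "vec_cl v \<star> vec_prod us = cl_scale ((-1) ^ length us) (vec_prod us \<star> vec_cl v)"
proof -
  have "vec_cl v \<star> vec_prod us = (vec_prod us \<star> vec_cl v \<star> vec_prod (rev us)) \<star> vec_prod us"
    using vec_prod_conj[OF assms(1), of v] assms(2) by simp
  also have "\<dots> = vec_prod us \<star> vec_cl v \<star> (vec_prod (rev us) \<star> vec_prod us)"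
    by (simp add: cl_mult_assoc)
  also have "\<dots> = cl_scale ((-1) ^ length us) (vec_prod us \<star> vec_cl v)"
    by (simp add: rev_vec_prod_mult assms(1) cl_scale_mult_right)
  finally show ?thesis .
qed

text \<open>An element of even (odd) length commuting (anticommuting) with all vectors has no component
  on a nonempty blade \<open>e\<^sub>J\<close>: comparing the coefficients of \<open>e\<^sub>i e\<^sub>J\<close> and \<open>e\<^sub>J e\<^sub>i\<close> for \<open>i \<in> J\<close>
  produces the wrong parity.\<close>

lemma vec_prod_scalar:
  assumes "\<forall>u\<in>set us. norm u = 1" "refl_prod us = id"
  shows "vec_prod us = cl_scale (vec_prod us {}) cl_one"
proof -
  define x where "x = vec_prod us"
  define s :: real where "s = (-1) ^ length us"
  have support: "J = {}" if J: "x J \<noteq> 0" for J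
  proof (rule ccontr)
    assume "J \<noteq> {}"
    then obtain i where "i \<in> J" by blast
    define K where "K = symdiff {i} J"
    have K: "symdiff {i} K = J" "symdiff K {i} = J" by (auto simp: K_def symdiff_def)
    have "(vec_cl (axis i 1) \<star> x) K = (\<Sum>j\<in>UNIV. if j = i then cl_sign {i} J * x J else 0)"
      unfolding vec_cl_mult_apply K by (intro sum.cong refl) (auto simp: axis_def K)
    moreover have "(x \<star> vec_cl (axis i 1)) K = (\<Sum>j\<in>UNIV. if j = i then cl_sign J {i} * x J else 0)"
      unfolding mult_vec_cl_apply K by (intro sum.cong refl) (auto simp: axis_def K)
    ultimately have "s * (cl_sign J {i} * x J) = cl_sign {i} J * x J"
      using fun_cong[OF vec_prod_commute_vec_cl[OF assms, of "axis i 1"], of K]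
      by (simp add: cl_scale_def x_def s_def)
    then have "s * cl_sign J {i} = cl_sign {i} J" using J by simp
    then have "s * cl_sign J {i} * cl_sign J {i} = cl_sign {i} J * cl_sign J {i}" by simp
    then have "s = (-1) ^ card (J - {i})"
      by (simp add: mult.assoc cl_sign_singleton_swap)
    moreover have "s = (-1) ^ card J"
      using vec_prod_parity[of us J] J by (simp add: s_def x_def)
    moreover have "card J = Suc (card (J - {i}))"
      using card_Suc_Diff1[of J i] \<open>i \<in> J\<close> by simp
    ultimately show False by simp
  qed
  show ?thesis
    unfolding x_def[symmetric]
    by (rule ext) (use support in \<open>auto simp: cl_scale_def cl_one_def\<close>)
qed

lemma pin_rho_kernel:
  assumes "x \<in> Pin" "pin_rho x = id"
  shows "x = cl_one \<or> x = cl_scale (-1) cl_one"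
proof -
  obtain us where us: "\<forall>u\<in>set us. norm u = 1" "x = vec_prod us"
    using assms(1) Pin_iff by blast
  have "refl_prod us = id" using assms(2) us pin_rho_vec_prod by metis
  then have scalar: "x = cl_scale (x {}) cl_one"
    using vec_prod_scalar us by blast
  have "(x {})\<^sup>2 = 1"
    using cl_sqnorm_vec_prod[OF us(1)] cl_sqnorm_scale_one[of "x {}"] scalar us(2) by metis
  then have "x {} = 1 \<or> x {} = -1" by (simp add: power2_eq_1_iff)
  then show ?thesis using scalar by auto
qed

lemma pin_rho_eq_imp_sign:
  assumes "a \<in> Pin" "b \<in> Pin" "pin_rho a = pin_rho b"
  shows "a = b \<or> a = cl_scale (-1) b"
proof -
  obtain b' where b': "b' \<in> Pin" "b \<star> b' = cl_one" "b' \<star> b = cl_one"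
    using Pin_inverse[OF assms(2)] by blast
  have "pin_rho (a \<star> b') = pin_rho b \<circ> pin_rho b'"
    using assms b' by (simp add: pin_rho_mult)
  also have "\<dots> = pin_rho (b \<star> b')"
    using assms(2) b'(1) by (simp add: pin_rho_mult)
  finally have "pin_rho (a \<star> b') = id"
    using b'(2) pin_rho_one by simp
  then have "a \<star> b' = cl_one \<or> a \<star> b' = cl_scale (-1) cl_one"
    using pin_rho_kernel Pin_mult assms b' by blast
  moreover have "a = (a \<star> b') \<star> b" using b' by (simp add: cl_mult_assoc)
  ultimately show ?thesis by (auto simp: cl_scale_mult_left)
qed

section \<open>Orthogonal involutions are products of reflections\<close>

lemma refl_prod_orthogonal:
  assumes "\<forall>u\<in>set us. norm u = 1" "distinct us" "pairwise orthogonal (set us)"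
  shows "refl_prod us v = v - 2 *\<^sub>R (\<Sum>b\<in>set us. (b \<bullet> v) *\<^sub>R b)"
  using assms
proof (induct us)
  case (Cons u us)
  define w where "w = v - 2 *\<^sub>R (\<Sum>b\<in>set us. (b \<bullet> v) *\<^sub>R b)"
  have IH: "refl_prod us v = w" using Cons by (simp add: w_def pairwise_insert)
  have "u \<bullet> b = 0" if "b \<in> set us" for b
    using Cons.prems that by (auto simp: pairwise_insert orthogonal_def)
  then have "u \<bullet> w = u \<bullet> v"
    by (simp add: w_def inner_diff_right inner_sum_right)
  then have "refl_prod (u # us) v = w - (2 * (u \<bullet> v)) *\<^sub>R u"
    by (simp add: IH reflect_def)
  also have "\<dots> = v - 2 *\<^sub>R (\<Sum>b\<in>set (u # us). (b \<bullet> v) *\<^sub>R b)"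
    using Cons.prems by (simp add: w_def algebra_simps scaleR_sum_right)
  finally show ?case .
qed simp

lemma orthonormal_span_expansion:
  fixes B :: "'a::euclidean_space set"
  assumes "finite B" "pairwise orthogonal B" "\<And>b. b \<in> B \<Longrightarrow> norm b = 1" "m \<in> span B"
  shows "(\<Sum>b\<in>B. (b \<bullet> m) *\<^sub>R b) = m"
proof -
  define r where "r = m - (\<Sum>b\<in>B. (b \<bullet> m) *\<^sub>R b)"
  have "r \<in> span B" unfolding r_def
    by (intro span_diff assms span_sum span_mul span_base)
  moreover have "orthogonal r b" if "b \<in> B" for b
  proof -
    have "(\<Sum>b'\<in>B. (b' \<bullet> m) * (b' \<bullet> b)) = (\<Sum>b'\<in>B. if b' = b then b \<bullet> m else 0)"
      using assms(2,3) that by (intro sum.cong refl) (auto simp: pairwise_def orthogonal_def norm_eq_1)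
    moreover have "r \<bullet> b = m \<bullet> b - (\<Sum>b'\<in>B. (b' \<bullet> m) * (b' \<bullet> b))"
      by (simp add: r_def inner_diff_left inner_sum_left)
    ultimately show ?thesis
      using that assms(1) by (simp add: orthogonal_def inner_commute)
  qed
  ultimately have "orthogonal r r" using orthogonal_to_span by blast
  then show ?thesis by (simp add: orthogonal_def r_def)
qed

text \<open>Reflect along an orthonormal basis of the \<open>-1\<close>-eigenspace.\<close>

lemma orthogonal_involution_refl_prod:
  fixes T :: "(real,'d::finite) vec \<Rightarrow> (real,'d) vec"
  assumes T: "orthogonal_transformation T" and TT: "\<And>v. T (T v) = v"
  obtains us where "\<forall>u\<in>set us. norm u = 1" "refl_prod us = T"
proof -
  have lin: "linear T" using T by (simp add: orthogonal_transformation_def)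
  define W where "W = {v. T v = - v}"
  have "subspace W"
    by (auto simp: subspace_def W_def linear_add[OF lin] linear_scale[OF lin] linear_0[OF lin])
  then obtain B where B: "B \<subseteq> W" "pairwise orthogonal B" "\<And>x. x \<in> B \<Longrightarrow> norm x = 1"
      "independent B" "span B = W"
    using orthonormal_basis_subspace by metis
  have "finite B" using B(4) independent_imp_finite by blast
  then obtain us where us: "set us = B" "distinct us" using finite_distinct_list by blast
  have unit: "\<forall>u\<in>set us. norm u = 1" using us B(3) by auto
  have "refl_prod us v = T v" for v
  proof -
    define m where "m = (1/2) *\<^sub>R (v - T v)"
    have "m \<in> W" unfolding W_def m_def
      using TT by (simp add: linear_scale[OF lin] linear_diff[OF lin] algebra_simps)
    have "v - m = (1/2) *\<^sub>R (v + T v)"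
      by (simp add: vec_eq_iff m_def algebra_simps)
    then have fixed: "T (v - m) = v - m"
      using TT by (simp add: linear_scale[OF lin] linear_add[OF lin] add.commute)
    have "b \<bullet> v = b \<bullet> m" if "b \<in> B" for b
    proof -
      have "b \<bullet> (v - m) = T b \<bullet> T (v - m)" using T by (simp add: orthogonal_transformation_def)
      also have "\<dots> = - (b \<bullet> (v - m))" using B(1) that fixed by (auto simp: W_def)
      finally show ?thesis by (simp add: inner_diff_right)
    qed
    then have "refl_prod us v = v - 2 *\<^sub>R (\<Sum>b\<in>B. (b \<bullet> m) *\<^sub>R b)"
      using refl_prod_orthogonal[OF unit us(2)] B(2) us(1) by simp
    also have "\<dots> = v - 2 *\<^sub>R m"
      using orthonormal_span_expansion[OF \<open>finite B\<close> B(2) B(3)] \<open>m \<in> W\<close> B(5) by simp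
    also have "\<dots> = T v" by (simp add: m_def algebra_simps)
    finally show ?thesis .
  qed
  then show ?thesis using unit that by blast
qed

lemma orthogonal_involution_lifts_to_Pin:
  fixes T :: "(real,'d::{finite,linorder}) vec \<Rightarrow> (real,'d) vec"
  assumes "orthogonal_transformation T" "\<And>v. T (T v) = v"
  obtains x where "x \<in> Pin" "pin_rho x = T"
  using orthogonal_involution_refl_prod[OF assms] Pin_iff pin_rho_vec_prod by metis

section \<open>Monoids satisfying the Coxeter relations of type \<open>A\<close>\<close>

text \<open>If \<open>s\<^sub>1, \<dots>, s\<^sub>N\<^sub>-\<^sub>1\<close> satisfy the Coxeter relations of \<open>S\<^sub>N\<close>, the submonoid they generate
  has at most \<open>N!\<close> elements: every word in \<open>s\<^sub>1, \<dots>, s\<^sub>m\<close> equals \<open>h (s\<^sub>m \<cdots> s\<^sub>k)\<close> with \<open>k \<le> m + 1\<close>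
  and \<open>h\<close> a word in \<open>s\<^sub>1, \<dots>, s\<^sub>m\<^sub>-\<^sub>1\<close>.\<close>

locale type_A_relations =
  fixes mult :: "'a \<Rightarrow> 'a \<Rightarrow> 'a" (infixl "\<diamond>" 70) and e :: 'a and s :: "nat \<Rightarrow> 'a" and N :: nat
  assumes assoc: "(a \<diamond> b) \<diamond> c = a \<diamond> (b \<diamond> c)"
    and left_unit [simp]: "e \<diamond> a = a" and right_unit [simp]: "a \<diamond> e = a"
    and s_square: "1 \<le> i \<Longrightarrow> i < N \<Longrightarrow> s i \<diamond> s i = e"
    and s_commute: "1 \<le> i \<Longrightarrow> i + 2 \<le> j \<Longrightarrow> j < N \<Longrightarrow> s i \<diamond> s j = s j \<diamond> s i"
    and s_braid: "1 \<le> i \<Longrightarrow> i + 1 < N \<Longrightarrow> s i \<diamond> s (Suc i) \<diamond> s i = s (Suc i) \<diamond> s i \<diamond> s (Suc i)"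
begin

inductive_set submonoid_gen :: "nat \<Rightarrow> 'a set" for m where
  unit: "e \<in> submonoid_gen m"
| step: "a \<in> submonoid_gen m \<Longrightarrow> 1 \<le> i \<Longrightarrow> i \<le> m \<Longrightarrow> a \<diamond> s i \<in> submonoid_gen m"

lemma submonoid_gen_mult:
  assumes "a \<in> submonoid_gen m" "b \<in> submonoid_gen m"
  shows "a \<diamond> b \<in> submonoid_gen m"
  using assms(2)
proof induct
  case (step b i)
  then have "a \<diamond> b \<diamond> s i \<in> submonoid_gen m" by (intro submonoid_gen.step) auto
  then show ?case by (simp add: assoc)
qed (simp add: assms(1))

fun descending :: "nat \<Rightarrow> nat \<Rightarrow> 'a" where
  "descending b 0 = e"
| "descending b (Suc l) = s (b + l) \<diamond> descending b l"

lemma descending_add: "descending b (l1 + l2) = descending (b + l1) l2 \<diamond> descending b l1"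
  by (induct l2) (simp_all add: assoc add.assoc)

lemma descending_Suc': "descending b (Suc l) = descending (Suc b) l \<diamond> s b"
  using descending_add[of b 1 l] by simp

lemma s_commute_descending:
  assumes "1 \<le> i" "i < N" "1 \<le> b" "b + l \<le> N"
    and "\<And>j. b \<le> j \<Longrightarrow> j < b + l \<Longrightarrow> i + 2 \<le> j \<or> j + 2 \<le> i"
  shows "s i \<diamond> descending b l = descending b l \<diamond> s i"
  using assms
proof (induct l)
  case (Suc l)
  have "i + 2 \<le> b + l \<or> b + l + 2 \<le> i" using Suc.prems(5)[of "b + l"] by simp
  then have s_i: "s i \<diamond> s (b + l) = s (b + l) \<diamond> s i"
  proof
    assume "i + 2 \<le> b + l"
    then show ?thesis using s_commute[of i "b + l"] Suc.prems by simp
  next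
    assume "b + l + 2 \<le> i"
    then show ?thesis using s_commute[of "b + l" i] Suc.prems by simp
  qed
  have IH: "s i \<diamond> descending b l = descending b l \<diamond> s i" using Suc by auto
  have "s i \<diamond> descending b (Suc l) = (s i \<diamond> s (b + l)) \<diamond> descending b l" by (simp add: assoc)
  also have "\<dots> = s (b + l) \<diamond> (s i \<diamond> descending b l)" by (simp add: s_i assoc)
  also have "\<dots> = descending b (Suc l) \<diamond> s i" by (simp add: IH assoc)
  finally show ?case .
qed simp

lemma descending_mult_s:
  assumes "1 \<le> k" "k < i" "i \<le> m" "m < N"
  shows "descending k (m + 1 - k) \<diamond> s i = s (i - 1) \<diamond> descending k (m + 1 - k)"
proof -
  define l1 where "l1 = i - 1 - k"
  define l3 where "l3 = m - i"
  have split: "descending k (m + 1 - k) = descending (i + 1) l3 \<diamond> (s i \<diamond> s (i - 1)) \<diamond> descending k l1"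
  proof -
    have "m + 1 - k = l1 + 2 + l3" "k + l1 = i - 1" "k + (l1 + 2) = i + 1"
      using assms by (simp_all add: l1_def l3_def)
    moreover have "descending (i - 1) 2 = s i \<diamond> s (i - 1)"
      using assms by (simp add: numeral_2_eq_2)
    ultimately show ?thesis
      using descending_add[of k "l1 + 2" l3] descending_add[of k l1 2] by (simp add: assoc)
  qed
  have c1: "s i \<diamond> descending k l1 = descending k l1 \<diamond> s i"
    by (rule s_commute_descending) (use assms in \<open>auto simp: l1_def\<close>)
  have c2: "s (i - 1) \<diamond> descending (i + 1) l3 = descending (i + 1) l3 \<diamond> s (i - 1)"
    by (rule s_commute_descending) (use assms in \<open>auto simp: l3_def\<close>)
  have braid: "s i \<diamond> s (i - 1) \<diamond> s i = s (i - 1) \<diamond> s i \<diamond> s (i - 1)"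
    using s_braid[of "i - 1"] assms by simp
  have "descending k (m + 1 - k) \<diamond> s i = descending (i + 1) l3 \<diamond> (s i \<diamond> s (i - 1) \<diamond> s i) \<diamond> descending k l1"
    unfolding split by (simp add: assoc c1[symmetric])
  also have "\<dots> = (descending (i + 1) l3 \<diamond> s (i - 1)) \<diamond> (s i \<diamond> s (i - 1) \<diamond> descending k l1)"
    unfolding braid by (simp add: assoc)
  also have "\<dots> = s (i - 1) \<diamond> descending k (m + 1 - k)"
    unfolding split c2[symmetric] by (simp add: assoc)
  finally show ?thesis .
qed

definition coset_cover :: "nat \<Rightarrow> 'a set" where
  "coset_cover m = (\<Union>k\<in>{1..m+1}. (\<lambda>h. h \<diamond> descending k (m + 1 - k)) ` submonoid_gen (m - 1))"

lemma coset_coverI: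
  "h \<in> submonoid_gen (m - 1) \<Longrightarrow> 1 \<le> k \<Longrightarrow> k \<le> m + 1 \<Longrightarrow> h \<diamond> descending k (m + 1 - k) \<in> coset_cover m"
  by (auto simp: coset_cover_def)

lemma coset_cover_mult_s:
  assumes m: "1 \<le> m" "m < N" and z: "z \<in> coset_cover m" and i: "1 \<le> i" "i \<le> m"
  shows "z \<diamond> s i \<in> coset_cover m"
proof -
  obtain k h where k: "1 \<le> k" "k \<le> m + 1" and h: "h \<in> submonoid_gen (m - 1)"
      and z_eq: "z = h \<diamond> descending k (m + 1 - k)"
    using z by (auto simp: coset_cover_def)
  consider (far) "i + 1 < k" | (next_to) "i + 1 = k" | (first) "i = k" | (inside) "k < i" by linarith
  then show ?thesis
  proof cases
    case far
    have "s i \<diamond> descending k (m + 1 - k) = descending k (m + 1 - k) \<diamond> s i"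
      by (rule s_commute_descending) (use m i far k in auto)
    then have "z \<diamond> s i = (h \<diamond> s i) \<diamond> descending k (m + 1 - k)"
      by (simp add: z_eq assoc)
    moreover have "h \<diamond> s i \<in> submonoid_gen (m - 1)"
      using h i far k by (intro submonoid_gen.step) auto
    ultimately show ?thesis using coset_coverI k by auto
  next
    case next_to
    have "m + 1 - i = Suc (m + 1 - k)" using next_to k by simp
    then have "descending i (m + 1 - i) = descending k (m + 1 - k) \<diamond> s i"
      using descending_Suc'[of i "m + 1 - k"] next_to by (simp del: descending.simps)
    then have "z \<diamond> s i = h \<diamond> descending i (m + 1 - i)"
      by (simp add: z_eq assoc)
    then show ?thesis using coset_coverI[OF h, of i] i by simp
  next
    case first
    have "m + 1 - k = Suc (m - k)" using first i by simp
    then have "descending k (m + 1 - k) = descending (Suc k) (m - k) \<diamond> s k"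
      using descending_Suc'[of k "m - k"] by (simp del: descending.simps)
    then have "z \<diamond> s i = h \<diamond> descending (Suc k) (m + 1 - Suc k)"
      using first i m by (simp add: z_eq assoc s_square)
    then show ?thesis using coset_coverI[OF h, of "Suc k"] first i by simp
  next
    case inside
    then have "z \<diamond> s i = (h \<diamond> s (i - 1)) \<diamond> descending k (m + 1 - k)"
      using descending_mult_s[of k i m] k i m by (simp add: z_eq assoc)
    moreover have "h \<diamond> s (i - 1) \<in> submonoid_gen (m - 1)"
      using h i inside k by (intro submonoid_gen.step) auto
    ultimately show ?thesis using coset_coverI k by auto
  qed
qed

lemma submonoid_gen_subset_coset_cover:
  assumes "1 \<le> m" "m < N"
  shows "submonoid_gen m \<subseteq> coset_cover m"
proof
  fix a assume "a \<in> submonoid_gen m"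
  then show "a \<in> coset_cover m"
  proof induct
    case unit
    show ?case using coset_coverI[OF submonoid_gen.unit, of "m + 1" m] by simp
  next
    case (step a i)
    then show ?case using coset_cover_mult_s assms by auto
  qed
qed

lemma card_submonoid_gen: "m < N \<Longrightarrow> finite (submonoid_gen m) \<and> card (submonoid_gen m) \<le> fact (m + 1)"
proof (induct m)
  case 0
  have "submonoid_gen 0 = {e}"
  proof (intro equalityI subsetI)
    fix a assume "a \<in> submonoid_gen 0" then show "a \<in> {e}" by induct auto
  qed (auto intro: submonoid_gen.unit)
  then show ?case by simp
next
  case (Suc m)
  have IH: "finite (submonoid_gen m)" "card (submonoid_gen m) \<le> fact (m + 1)" using Suc by auto
  have fin: "finite (coset_cover (Suc m))" using IH by (simp add: coset_cover_def)
  have sub: "submonoid_gen (Suc m) \<subseteq> coset_cover (Suc m)"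
    using Suc.prems by (intro submonoid_gen_subset_coset_cover) auto
  have "card (coset_cover (Suc m)) \<le>
      (\<Sum>k\<in>{1..Suc m + 1}. card ((\<lambda>h. h \<diamond> descending k (Suc m + 1 - k)) ` submonoid_gen m))"
    unfolding coset_cover_def diff_Suc_1 by (rule card_UN_le) simp
  also have "\<dots> \<le> (\<Sum>k\<in>{1..Suc m + 1}. card (submonoid_gen m))"
    by (intro sum_mono card_image_le IH)
  also have "\<dots> = (Suc m + 1) * card (submonoid_gen m)" by simp
  also have "\<dots> \<le> (Suc m + 1) * fact (m + 1)"
    using IH(2) by (rule mult_le_mono2)
  also have "\<dots> = fact (Suc m + 1)"
    by (simp add: fact_Suc)
  finally have "card (coset_cover (Suc m)) \<le> fact (Suc m + 1)" .
  moreover have "card (submonoid_gen (Suc m)) \<le> card (coset_cover (Suc m))"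
    by (rule card_mono[OF fin sub])
  ultimately show ?case using finite_subset[OF sub fin] by simp
qed

end

section \<open>Lifting representations of symmetric groups\<close>

lemma spinorial_restrict:
  assumes "spinorial G \<pi>" "H \<subseteq> carrier G"
  shows "spinorial (G\<lparr>carrier := H\<rparr>) \<pi>"
  using assms unfolding spinorial_def by auto blast

lemma spinorial_cyclic_involution_lift:
  assumes "monoid G" "spinorial (G\<lparr>carrier := generate G {a}\<rparr>) \<pi>" "a \<otimes>\<^bsub>G\<^esub> a = \<one>\<^bsub>G\<^esub>"
  obtains t where "t \<in> Pin" "pin_rho t = \<pi> a" "t \<star> t = cl_one"
proof -
  let ?H = "generate G {a}"
  obtain \<phi> where \<phi>: "\<forall>g\<in>?H. \<phi> g \<in> Pin" "\<forall>g\<in>?H. \<forall>h\<in>?H. \<phi> (g \<otimes>\<^bsub>G\<^esub> h) = \<phi> g \<star> \<phi> h"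
      "\<forall>g\<in>?H. pin_rho (\<phi> g) = \<pi> g"
    using assms(2) unfolding spinorial_def by auto
  have a: "a \<in> ?H" by (rule generate.incl) simp
  have one: "\<one>\<^bsub>G\<^esub> \<in> ?H" by (rule generate.one)
  have "\<phi> a \<star> \<phi> a = \<phi> \<one>\<^bsub>G\<^esub>" using \<phi>(2) a assms(3) by metis
  moreover have "\<phi> \<one>\<^bsub>G\<^esub> \<star> \<phi> \<one>\<^bsub>G\<^esub> = \<phi> \<one>\<^bsub>G\<^esub>"
    using \<phi>(2) one monoid.l_one[OF assms(1) monoid.one_closed[OF assms(1)]] by metis
  then have "\<phi> \<one>\<^bsub>G\<^esub> = cl_one"
    using \<phi>(1) one by (intro Pin_idempotent) auto
  ultimately show ?thesis using that \<phi>(1,3) a by auto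
qed

definition adj_transp :: "nat \<Rightarrow> nat \<Rightarrow> nat" where
  "adj_transp i = Transposition.transpose i (Suc i)"

lemma adj_transp_square: "adj_transp i \<circ> adj_transp i = id"
  by (simp add: adj_transp_def)

lemma adj_transp_commute: "i + 2 \<le> j \<Longrightarrow> adj_transp i \<circ> adj_transp j = adj_transp j \<circ> adj_transp i"
  by (rule ext) (auto simp: adj_transp_def Transposition.transpose_def)

lemma adj_transp_braid:
  "adj_transp i \<circ> adj_transp (Suc i) \<circ> adj_transp i = adj_transp (Suc i) \<circ> adj_transp i \<circ> adj_transp (Suc i)"
  by (rule ext) (auto simp: adj_transp_def Transposition.transpose_def)

lemma adj_transp_cube:
  "(adj_transp i \<circ> adj_transp (Suc i)) \<circ> (adj_transp i \<circ> adj_transp (Suc i)) \<circ> (adj_transp i \<circ> adj_transp (Suc i)) = id"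
  by (rule ext) (auto simp: adj_transp_def Transposition.transpose_def)

lemma transpose_in_sym_group:
  "a \<in> {1..n} \<Longrightarrow> b \<in> {1..n} \<Longrightarrow> Transposition.transpose a b \<in> carrier (sym_group n)"
  by (simp add: sym_group_carrier permutes_swap_id)

lemma adj_transp_in_sym_group: "1 \<le> i \<Longrightarrow> i < n \<Longrightarrow> adj_transp i \<in> carrier (sym_group n)"
  unfolding adj_transp_def by (rule transpose_in_sym_group) auto

lemma comp_in_sym_group:
  "g \<in> carrier (sym_group n) \<Longrightarrow> h \<in> carrier (sym_group n) \<Longrightarrow> g \<circ> h \<in> carrier (sym_group n)"
  by (simp add: sym_group_carrier permutes_compose)

lemma inv_in_sym_group: "g \<in> carrier (sym_group n) \<Longrightarrow> inv' g \<in> carrier (sym_group n)"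
  by (simp add: sym_group_carrier permutes_inv)

lemma conj_transpose:
  assumes "bij g"
  shows "g \<circ> Transposition.transpose a b \<circ> inv' g = Transposition.transpose (g a) (g b)"
proof -
  have "Transposition.transpose (g a) (g b) \<circ> g = g \<circ> Transposition.transpose a b"
    using transpose_comp_eq[OF assms] assms by (simp add: bij_is_inj)
  then show ?thesis
    using assms by (metis bij_is_surj comp_assoc comp_id surj_iff)
qed

lemma conj_comp_distrib: "bij g \<Longrightarrow> g \<circ> (a \<circ> b) \<circ> inv' g = (g \<circ> a \<circ> inv' g) \<circ> (g \<circ> b \<circ> inv' g)"
  by (simp add: fun_eq_iff bij_is_inj bij_is_surj surj_f_inv_f)

lemma transpose_in_adj_transp_closure:
  assumes id: "id \<in> A" and adj: "\<And>i. 1 \<le> i \<Longrightarrow> i < n \<Longrightarrow> adj_transp i \<in> A"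
    and comp: "\<And>g h. g \<in> A \<Longrightarrow> h \<in> A \<Longrightarrow> g \<circ> h \<in> A"
    and ab: "a \<in> {1..n}" "b \<in> {1..n}"
  shows "Transposition.transpose a b \<in> A"
proof -
  have gap: "Transposition.transpose a (a + d + 1) \<in> A" if "1 \<le> a" "a + d + 1 \<le> n" for a d
    using that
  proof (induct d)
    case 0
    then show ?case using adj[of a] by (simp add: adj_transp_def)
  next
    case (Suc d)
    define c where "c = a + d + 1"
    have "adj_transp c \<circ> Transposition.transpose a c \<circ> adj_transp c = Transposition.transpose a (a + Suc d + 1)"
      by (rule ext) (auto simp: c_def adj_transp_def Transposition.transpose_def)
    moreover have "Transposition.transpose a c \<in> A" "adj_transp c \<in> A"
      using Suc by (auto simp: c_def intro: adj)
    ultimately show ?case using comp by metis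
  qed
  consider "a < b" | "a = b" | "b < a" by linarith
  then show ?thesis
  proof cases
    case 1 then show ?thesis using gap[of a "b - a - 1"] ab by simp
  next
    case 2 then show ?thesis using id by simp
  next
    case 3 then show ?thesis using gap[of b "a - b - 1"] ab by (simp add: transpose_commute)
  qed
qed

lemma sym_group_carrier_subset:
  assumes id: "id \<in> A" and adj: "\<And>i. 1 \<le> i \<Longrightarrow> i < n \<Longrightarrow> adj_transp i \<in> A"
    and comp: "\<And>g h. g \<in> A \<Longrightarrow> h \<in> A \<Longrightarrow> g \<circ> h \<in> A"
  shows "carrier (sym_group n) \<subseteq> A"
proof
  fix g assume "g \<in> carrier (sym_group n)"
  then have "g permutes {1..n}" by (simp add: sym_group_carrier)
  from this finite_atLeastAtMost[of 1 n] show "g \<in> A"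
  proof (induct rule: permutes_induct)
    case id then show ?case by (rule \<open>id \<in> A\<close>)
  next
    case (swap a b p)
    then show ?case using comp transpose_in_adj_transp_closure[OF assms] by blast
  qed
qed

locale sym_group_rep =
  fixes n :: nat and \<pi> :: "(nat \<Rightarrow> nat) \<Rightarrow> (real, 'd::{finite,linorder}) vec \<Rightarrow> (real,'d) vec"
  assumes rep: "real_rep (sym_group n) \<pi>"
begin

abbreviation "S \<equiv> carrier (sym_group n)"

lemma rep_comp: "g \<in> S \<Longrightarrow> h \<in> S \<Longrightarrow> \<pi> (g \<circ> h) = \<pi> g \<circ> \<pi> h"
  using rep by (simp add: real_rep_def sym_group_mult)

lemma rep_orthogonal: "g \<in> S \<Longrightarrow> orthogonal_transformation (\<pi> g)"
  using rep by (simp add: real_rep_def)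

lemma id_in_S: "id \<in> S"
  by (simp add: sym_group_carrier permutes_id)

lemma rep_id: "\<pi> id = id"
proof
  fix v
  have "\<pi> id (\<pi> id v) = \<pi> id v" using rep_comp[OF id_in_S id_in_S] by (metis comp_apply id_comp)
  then show "\<pi> id v = id v"
    using orthogonal_transformation_inj[OF rep_orthogonal[OF id_in_S]] by (simp add: inj_eq)
qed

lemma lift_exists:
  assumes "g \<in> S"
  obtains x where "x \<in> Pin" "pin_rho x = \<pi> g"
proof -
  have "g permutes {1..n}" using assms by (simp add: sym_group_carrier)
  from this finite_atLeastAtMost[of 1 n] have "\<exists>x. x \<in> Pin \<and> pin_rho x = \<pi> g"
  proof (induct rule: permutes_induct)
    case id then show ?case using pin_rho_one rep_id Pin_one by metis
  next
    case (swap a b p)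
    let ?t = "Transposition.transpose a b"
    have t_in: "?t \<in> S" by (rule transpose_in_sym_group) (use swap in auto)
    have p_in: "p \<in> S" using swap by (simp add: sym_group_carrier)
    have "\<pi> ?t (\<pi> ?t v) = v" for v
      using rep_comp[OF t_in t_in] rep_id by (metis comp_apply id_apply transpose_comp_involutory)
    then obtain t where t: "t \<in> Pin" "pin_rho t = \<pi> ?t"
      using orthogonal_involution_lifts_to_Pin[OF rep_orthogonal[OF t_in]] by metis
    obtain x where x: "x \<in> Pin" "pin_rho x = \<pi> p" using swap by blast
    have "pin_rho (t \<star> x) = \<pi> (?t \<circ> p)"
      using x t by (simp add: pin_rho_mult rep_comp[OF t_in p_in])
    then show ?case using Pin_mult[OF t(1) x(1)] by blast
  qed
  then show ?thesis using that by blast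
qed

lemma lift_conj:
  assumes g: "g \<in> S" and h: "h \<in> S" and t: "t \<in> Pin" "pin_rho t = \<pi> h" "t \<star> t = cl_one"
  obtains q where "q \<in> Pin" "pin_rho q = \<pi> (g \<circ> h \<circ> inv' g)" "q \<star> q = cl_one"
proof -
  obtain z where z: "z \<in> Pin" "pin_rho z = \<pi> g" using lift_exists[OF g] .
  obtain z' where z': "z' \<in> Pin" "z \<star> z' = cl_one" "z' \<star> z = cl_one" using Pin_inverse[OF z(1)] .
  have g': "inv' g \<in> S" using g by (rule inv_in_sym_group)
  have "g \<circ> inv' g = id" using g by (simp add: sym_group_carrier permutes_inv_o)
  then have "\<pi> g \<circ> \<pi> (inv' g) = id" using rep_comp[OF g g'] rep_id by simp
  then have "pin_rho z' = pin_rho z' \<circ> \<pi> g \<circ> \<pi> (inv' g)" by (simp add: comp_assoc)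
  also have "\<dots> = pin_rho (z' \<star> z) \<circ> \<pi> (inv' g)" using pin_rho_mult[OF z'(1) z(1)] z(2) by simp
  finally have z'_rho: "pin_rho z' = \<pi> (inv' g)" using z'(3) by (simp add: pin_rho_one)
  define q where "q = z \<star> t \<star> z'"
  have "q \<in> Pin" unfolding q_def by (intro Pin_mult z t z')
  moreover have "pin_rho q = \<pi> (g \<circ> h \<circ> inv' g)"
    unfolding q_def using z t z' z'_rho g h g'
    by (simp add: pin_rho_mult Pin_mult rep_comp comp_in_sym_group)
  moreover have "q \<star> q = cl_one"
  proof -
    have "q \<star> q = z \<star> t \<star> (z' \<star> z) \<star> t \<star> z'" by (simp add: q_def cl_mult_assoc)
    also have "\<dots> = z \<star> (t \<star> t) \<star> z'" by (simp add: z'(3) cl_mult_assoc)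
    also have "\<dots> = cl_one" by (simp add: t(3) z'(2))
    finally show ?thesis .
  qed
  ultimately show ?thesis by (rule that)
qed

lemma lift_cube:
  assumes "w \<in> Pin" "c \<in> S" "pin_rho w = \<pi> c" "c \<circ> c \<circ> c = id"
  shows "w \<star> w \<star> w = cl_one \<or> w \<star> w \<star> w = cl_scale (-1) cl_one"
proof (rule pin_rho_kernel)
  show "w \<star> w \<star> w \<in> Pin" using assms(1) by (intro Pin_mult)
  have "pin_rho (w \<star> w \<star> w) = \<pi> c \<circ> \<pi> c \<circ> \<pi> c"
    using assms(1,3) by (simp add: pin_rho_mult Pin_mult)
  also have "\<dots> = \<pi> (c \<circ> c \<circ> c)"
    using assms(2) by (simp add: rep_comp comp_in_sym_group)
  finally show "pin_rho (w \<star> w \<star> w) = id" using assms(4) rep_id by simp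
qed

end

definition pair_mult :: "('a \<Rightarrow> 'a) \<times> 'd::{finite,linorder} cliff \<Rightarrow> ('a \<Rightarrow> 'a) \<times> 'd cliff \<Rightarrow> ('a \<Rightarrow> 'a) \<times> 'd cliff" where
  "pair_mult a b = (fst a \<circ> fst b, snd a \<star> snd b)"

text \<open>Lifts of \<open>\<pi>(s\<^sub>1)\<close> and \<open>\<pi>(s\<^sub>1 s\<^sub>3)\<close> that square to \<open>1\<close>, as provided by the spinoriality of
  the two cyclic subgroups.\<close>

locale sym_group_rep_lifts = sym_group_rep n \<pi>
  for n and \<pi> :: "(nat \<Rightarrow> nat) \<Rightarrow> (real, 'd::{finite,linorder}) vec \<Rightarrow> (real,'d) vec" +
  fixes t y :: "'d cliff"
  assumes n_ge_4: "n \<ge> 4"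
    and t: "t \<in> Pin" "pin_rho t = \<pi> (adj_transp 1)" "t \<star> t = cl_one"
    and y: "y \<in> Pin" "pin_rho y = \<pi> (adj_transp 1 \<circ> adj_transp 3)" "y \<star> y = cl_one"
begin

lemma adj_transp_lift_exists:
  assumes "1 \<le> k" "k < n"
  shows "\<exists>b. b \<in> Pin \<and> pin_rho b = \<pi> (adj_transp k) \<and> b \<star> b = cl_one"
proof -
  define g where "g = Transposition.transpose 1 k \<circ> Transposition.transpose 2 (Suc k)"
  have g: "g \<in> S" unfolding g_def using assms n_ge_4
    by (intro comp_in_sym_group transpose_in_sym_group) auto
  have "g \<circ> adj_transp 1 \<circ> inv' g = Transposition.transpose (g 1) (g (Suc 1))"
    unfolding adj_transp_def using g by (intro conj_transpose) (simp add: sym_group_carrier permutes_bij)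
  also have "\<dots> = adj_transp k"
    using assms by (simp add: g_def adj_transp_def Transposition.transpose_def)
  finally have conj: "g \<circ> adj_transp 1 \<circ> inv' g = adj_transp k" .
  have "adj_transp 1 \<in> S" using n_ge_4 by (intro adj_transp_in_sym_group) auto
  from lift_conj[OF g this t] show ?thesis unfolding conj by blast
qed

definition adj_transp_lift :: "nat \<Rightarrow> 'd cliff" where
  "adj_transp_lift k = (SOME b. b \<in> Pin \<and> pin_rho b = \<pi> (adj_transp k) \<and> b \<star> b = cl_one)"

lemma adj_transp_lift:
  assumes "1 \<le> k" "k < n"
  shows "adj_transp_lift k \<in> Pin" "pin_rho (adj_transp_lift k) = \<pi> (adj_transp k)"
    "adj_transp_lift k \<star> adj_transp_lift k = cl_one"
  using someI_ex[OF adj_transp_lift_exists[OF assms]] unfolding adj_transp_lift_def by auto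

text \<open>Lifts are only determined up to sign; the sign of \<open>X\<^sub>k\<^sub>+\<^sub>1\<close> is fixed so
  that \<open>(X\<^sub>kX\<^sub>k\<^sub>+\<^sub>1)\<^sup>3 = 1\<close>, which is possible because this cube lies in the kernel \<open>{1, -1}\<close>.\<close>

primrec gen_lift :: "nat \<Rightarrow> 'd cliff" where
  "gen_lift 0 = cl_one"
| "gen_lift (Suc k) =
    (let b = adj_transp_lift (Suc k); w = gen_lift k \<star> b
     in if w \<star> w \<star> w = cl_one then b else cl_scale (-1) b)"

lemma gen_lift:
  assumes "1 \<le> k" "k < n"
  shows "gen_lift k \<in> Pin" "pin_rho (gen_lift k) = \<pi> (adj_transp k)"
    "gen_lift k \<star> gen_lift k = cl_one"
proof -
  obtain k' where k': "k = Suc k'" using assms by (cases k) auto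
  show "gen_lift k \<in> Pin" "pin_rho (gen_lift k) = \<pi> (adj_transp k)"
    "gen_lift k \<star> gen_lift k = cl_one"
    using adj_transp_lift[OF assms] unfolding k'
    by (auto simp: Let_def Pin_minus cl_scale_minus_one_square)
qed

lemma gen_lift_cube:
  assumes "1 \<le> i" "Suc i < n"
  shows "gen_lift i \<star> gen_lift (Suc i) \<star> (gen_lift i \<star> gen_lift (Suc i)) \<star> (gen_lift i \<star> gen_lift (Suc i)) = cl_one"
proof -
  define b where "b = adj_transp_lift (Suc i)"
  define w where "w = gen_lift i \<star> b"
  define c where "c = adj_transp i \<circ> adj_transp (Suc i)"
  have X: "gen_lift i \<in> Pin" "pin_rho (gen_lift i) = \<pi> (adj_transp i)"
    using gen_lift[of i] assms by auto
  have b: "b \<in> Pin" "pin_rho b = \<pi> (adj_transp (Suc i))"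
    using adj_transp_lift[of "Suc i"] assms by (auto simp: b_def)
  have adj: "adj_transp i \<in> S" "adj_transp (Suc i) \<in> S"
    using assms by (auto intro: adj_transp_in_sym_group)
  have "w \<in> Pin" unfolding w_def using X b by (intro Pin_mult)
  moreover have "c \<in> S" unfolding c_def using adj by (rule comp_in_sym_group)
  moreover have "pin_rho w = \<pi> c"
    unfolding w_def c_def using X b adj by (simp add: pin_rho_mult rep_comp)
  moreover have "c \<circ> c \<circ> c = id" unfolding c_def by (rule adj_transp_cube)
  ultimately have "w \<star> w \<star> w = cl_one \<or> w \<star> w \<star> w = cl_scale (-1) cl_one"
    by (rule lift_cube)
  then show ?thesis
    by (auto simp: Let_def w_def b_def cl_scale_mult_left cl_scale_mult_right)
qed

lemma gen_lift_braid:
  assumes "1 \<le> i" "Suc i < n"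
  shows "gen_lift i \<star> gen_lift (Suc i) \<star> gen_lift i = gen_lift (Suc i) \<star> gen_lift i \<star> gen_lift (Suc i)"
proof -
  let ?a = "gen_lift i" and ?b = "gen_lift (Suc i)"
  have aa: "?a \<star> ?a = cl_one" and bb: "?b \<star> ?b = cl_one"
    using gen_lift(3)[of i] gen_lift(3)[of "Suc i"] assms by auto
  have "(?a \<star> ?b \<star> (?a \<star> ?b) \<star> (?a \<star> ?b)) \<star> (?b \<star> ?a \<star> ?b) = ?a \<star> ?b \<star> ?a"
    by (simp add: cl_mult_assoc cl_mult_cancel_left[OF aa] cl_mult_cancel_left[OF bb] aa bb del: gen_lift.simps)
  then show ?thesis using gen_lift_cube[OF assms] by (simp del: gen_lift.simps)
qed

lemma far_adj_transp_pair_lift_exists: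
  assumes "1 \<le> i" "i + 2 \<le> j" "j < n"
  obtains q where "q \<in> Pin" "pin_rho q = \<pi> (adj_transp i \<circ> adj_transp j)" "q \<star> q = cl_one"
proof -
  define g where "g = Transposition.transpose 1 i \<circ> Transposition.transpose 2 (Suc i) \<circ>
      Transposition.transpose 3 j \<circ> Transposition.transpose 4 (Suc j)"
  have g: "g \<in> S" unfolding g_def using assms n_ge_4
    by (intro comp_in_sym_group transpose_in_sym_group) auto
  then have "bij g" by (simp add: sym_group_carrier permutes_bij)
  have s13: "adj_transp 1 \<circ> adj_transp 3 \<in> S"
    using n_ge_4 by (intro comp_in_sym_group adj_transp_in_sym_group) auto
  have "g \<circ> (adj_transp 1 \<circ> adj_transp 3) \<circ> inv' g =
      (g \<circ> adj_transp 1 \<circ> inv' g) \<circ> (g \<circ> adj_transp 3 \<circ> inv' g)"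
    using \<open>bij g\<close> by (rule conj_comp_distrib)
  also have "\<dots> = Transposition.transpose (g 1) (g 2) \<circ> Transposition.transpose (g 3) (g 4)"
    unfolding adj_transp_def using conj_transpose[OF \<open>bij g\<close>] by (simp add: numeral_eq_Suc)
  also have "\<dots> = adj_transp i \<circ> adj_transp j"
    using assms by (simp add: g_def adj_transp_def Transposition.transpose_def)
  finally show ?thesis
    using lift_conj[OF g s13 y] that by metis
qed

text \<open>\<open>X\<^sub>i X\<^sub>j\<close> and the conjugate of \<open>y\<close> lifting \<open>\<pi>(s\<^sub>i s\<^sub>j)\<close> agree up to sign, so \<open>X\<^sub>i X\<^sub>j\<close> squares to \<open>1\<close>.\<close>

lemma gen_lift_commute:
  assumes "1 \<le> i" "i + 2 \<le> j" "j < n"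
  shows "gen_lift i \<star> gen_lift j = gen_lift j \<star> gen_lift i"
proof -
  obtain q where q: "q \<in> Pin" "pin_rho q = \<pi> (adj_transp i \<circ> adj_transp j)" "q \<star> q = cl_one"
    using far_adj_transp_pair_lift_exists[OF assms] .
  have Xi: "gen_lift i \<in> Pin" "pin_rho (gen_lift i) = \<pi> (adj_transp i)" "gen_lift i \<star> gen_lift i = cl_one"
    using gen_lift[of i] assms by auto
  have Xj: "gen_lift j \<in> Pin" "pin_rho (gen_lift j) = \<pi> (adj_transp j)" "gen_lift j \<star> gen_lift j = cl_one"
    using gen_lift[of j] assms by auto
  have "pin_rho (gen_lift i \<star> gen_lift j) = pin_rho q"
    using Xi Xj q assms by (simp add: pin_rho_mult rep_comp adj_transp_in_sym_group)
  then have "gen_lift i \<star> gen_lift j = q \<or> gen_lift i \<star> gen_lift j = cl_scale (-1) q"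
    using pin_rho_eq_imp_sign[OF Pin_mult[OF Xi(1) Xj(1)] q(1)] by blast
  then have square: "(gen_lift i \<star> gen_lift j) \<star> (gen_lift i \<star> gen_lift j) = cl_one"
    using q(3) cl_scale_minus_one_square by metis
  have "gen_lift i \<star> ((gen_lift i \<star> gen_lift j) \<star> (gen_lift i \<star> gen_lift j)) \<star> gen_lift j = gen_lift j \<star> gen_lift i"
    by (simp add: cl_mult_assoc cl_mult_cancel_left[OF Xi(3)] cl_mult_cancel_left[OF Xj(3)] Xi(3) Xj(3)
        del: gen_lift.simps)
  then show ?thesis using square by (simp del: gen_lift.simps)
qed

sublocale lifted: type_A_relations pair_mult "(id, cl_one)" "\<lambda>i. (adj_transp i, gen_lift i)" n
proof
  fix a b c :: "(nat \<Rightarrow> nat) \<times> 'd cliff"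
  show "pair_mult (pair_mult a b) c = pair_mult a (pair_mult b c)"
    by (simp add: pair_mult_def comp_assoc cl_mult_assoc)
  show "pair_mult (id, cl_one) a = a" "pair_mult a (id, cl_one) = a"
    by (simp_all add: pair_mult_def)
next
  fix i assume "1 \<le> i" "i < n"
  then show "pair_mult (adj_transp i, gen_lift i) (adj_transp i, gen_lift i) = (id, cl_one)"
    using gen_lift(3)[of i] by (simp add: pair_mult_def adj_transp_square del: gen_lift.simps)
next
  fix i j assume "1 \<le> i" "i + 2 \<le> j" "j < n"
  then show "pair_mult (adj_transp i, gen_lift i) (adj_transp j, gen_lift j) =
      pair_mult (adj_transp j, gen_lift j) (adj_transp i, gen_lift i)"
    using gen_lift_commute[of i j] adj_transp_commute[of i j] by (simp add: pair_mult_def del: gen_lift.simps)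
next
  fix i assume "1 \<le> i" "i + 1 < n"
  then show "pair_mult (pair_mult (adj_transp i, gen_lift i) (adj_transp (Suc i), gen_lift (Suc i)))
      (adj_transp i, gen_lift i) =
    pair_mult (pair_mult (adj_transp (Suc i), gen_lift (Suc i)) (adj_transp i, gen_lift i))
      (adj_transp (Suc i), gen_lift (Suc i))"
    using gen_lift_braid[of i] adj_transp_braid[of i] by (simp add: pair_mult_def del: gen_lift.simps)
qed

abbreviation "graph \<equiv> lifted.submonoid_gen (n - 1)"

lemma graph_subset: "graph \<subseteq> {(g, x). g \<in> S \<and> x \<in> Pin \<and> pin_rho x = \<pi> g}"
proof
  fix a assume "a \<in> graph"
  then show "a \<in> {(g, x). g \<in> S \<and> x \<in> Pin \<and> pin_rho x = \<pi> g}"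
  proof induct
    case unit
    then show ?case using id_in_S Pin_one pin_rho_one rep_id by simp
  next
    case (step a i)
    obtain g x where a: "a = (g, x)" by (cases a)
    have i: "1 \<le> i" "i < n" using step n_ge_4 by auto
    have "adj_transp i \<in> S" using i by (rule adj_transp_in_sym_group)
    then show ?case
      using step gen_lift[OF i]
      by (auto simp: a pair_mult_def comp_in_sym_group Pin_mult pin_rho_mult rep_comp simp del: gen_lift.simps)
  qed
qed

lemma fst_graph: "fst ` graph = S"
proof
  show "fst ` graph \<subseteq> S" using graph_subset by auto
  show "S \<subseteq> fst ` graph"
  proof (rule sym_group_carrier_subset)
    show "id \<in> fst ` graph"
      using lifted.submonoid_gen.unit by force
    show "adj_transp i \<in> fst ` graph" if "1 \<le> i" "i < n" for i
    proof (rule rev_image_eqI)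
      show "pair_mult (id, cl_one) (adj_transp i, gen_lift i) \<in> graph"
        using that by (intro lifted.submonoid_gen.step lifted.submonoid_gen.unit) auto
    qed (simp add: pair_mult_def)
    show "g \<circ> h \<in> fst ` graph" if "g \<in> fst ` graph" "h \<in> fst ` graph" for g h
      using that lifted.submonoid_gen_mult by (force simp: pair_mult_def)
  qed
qed

lemma inj_on_fst_graph: "inj_on fst graph"
proof -
  have "finite graph" "card graph \<le> fact n"
    using lifted.card_submonoid_gen[of "n - 1"] n_ge_4 by auto
  moreover have "card (fst ` graph) = fact n"
    by (simp only: fst_graph sym_group_card_carrier)
  ultimately show ?thesis
    using card_image_le[of graph fst] by (simp add: eq_card_imp_inj_on)
qed

lemma spinorial_sym_group: "spinorial (sym_group n) \<pi>"
proof -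
  define \<phi> where "\<phi> g = (SOME x. (g, x) \<in> graph)" for g
  have \<phi>: "(g, \<phi> g) \<in> graph" if "g \<in> S" for g
  proof -
    have "\<exists>x. (g, x) \<in> graph" using that fst_graph by force
    then show ?thesis unfolding \<phi>_def by (rule someI_ex)
  qed
  have unique: "x = x'" if "(g, x) \<in> graph" "(g, x') \<in> graph" for g x x'
    using inj_onD[OF inj_on_fst_graph _ that] by simp
  show ?thesis
    unfolding spinorial_def
  proof (intro exI[of _ \<phi>] conjI ballI)
    fix g assume "g \<in> S"
    then show "\<phi> g \<in> Pin" "pin_rho (\<phi> g) = \<pi> g" using graph_subset \<phi> by auto
  next
    fix g h assume g: "g \<in> S" and h: "h \<in> S"
    have "pair_mult (g, \<phi> g) (h, \<phi> h) \<in> graph"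
      using \<phi> g h lifted.submonoid_gen_mult by blast
    moreover have "(g \<circ> h, \<phi> (g \<circ> h)) \<in> graph" using \<phi> comp_in_sym_group g h by blast
    ultimately show "\<phi> (g \<otimes>\<^bsub>sym_group n\<^esub> h) = \<phi> g \<star> \<phi> h"
      by (simp add: pair_mult_def sym_group_mult unique)
  qed
qed

end

context sym_group_rep
begin

lemma spinorial_if_cyclic_restrictions_spinorial:
  assumes "n \<ge> 4"
    and "spinorial ((sym_group n)\<lparr>carrier := generate (sym_group n) {adj_transp 1}\<rparr>) \<pi>"
    and "spinorial ((sym_group n)\<lparr>carrier := generate (sym_group n) {adj_transp 1 \<circ> adj_transp 3}\<rparr>) \<pi>"
  shows "spinorial (sym_group n) \<pi>"
proof -
  have s13_square: "(adj_transp 1 \<circ> adj_transp 3) \<circ> (adj_transp 1 \<circ> adj_transp 3) = id"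
    by (rule ext) (simp add: adj_transp_def Transposition.transpose_def)
  note cyclic_lift = spinorial_cyclic_involution_lift[OF group.is_monoid[OF sym_group_is_group]]
  obtain t y where "t \<in> Pin" "pin_rho t = \<pi> (adj_transp 1)" "t \<star> t = cl_one"
    and "y \<in> Pin" "pin_rho y = \<pi> (adj_transp 1 \<circ> adj_transp 3)" "y \<star> y = cl_one"
    using cyclic_lift[OF assms(2)] cyclic_lift[OF assms(3)]
    by (metis adj_transp_square s13_square sym_group_mult sym_group_one)
  then interpret sym_group_rep_lifts n \<pi> t y
    using assms(1) by unfold_locales auto
  show ?thesis by (rule spinorial_sym_group)
qed

end

theorem corollary3p5:
  fixes n :: nat and \<pi> :: "(nat \<Rightarrow> nat) \<Rightarrow> (real, 'd::{finite,linorder}) vec \<Rightarrow> (real,'d) vec"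
  assumes "n \<ge> 4"
    and "real_rep (sym_group n) \<pi>"
  shows "spinorial (sym_group n) \<pi> \<longleftrightarrow>
    spinorial ((sym_group n)\<lparr>carrier := generate (sym_group n) {Transposition.transpose (1::nat) 2}\<rparr>) \<pi> \<and>
    spinorial ((sym_group n)\<lparr>carrier := generate (sym_group n) {Transposition.transpose (1::nat) 2 \<circ> Transposition.transpose (3::nat) 4}\<rparr>) \<pi>"
proof -
  interpret sym_group_rep n \<pi> by (rule sym_group_rep.intro) (fact assms(2))
  have "adj_transp 1 = Transposition.transpose (1::nat) 2" "adj_transp 3 = Transposition.transpose (3::nat) 4"
    by (simp_all add: adj_transp_def numeral_eq_Suc)
  moreover have "adj_transp 1 \<in> S" "adj_transp 1 \<circ> adj_transp 3 \<in> S"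
    using assms(1) by (auto intro!: adj_transp_in_sym_group comp_in_sym_group)
  then have "generate (sym_group n) {adj_transp 1} \<subseteq> S"
    and "generate (sym_group n) {adj_transp 1 \<circ> adj_transp 3} \<subseteq> S"
    by (auto intro!: group.generate_incl[OF sym_group_is_group])
  ultimately show ?thesis
    using spinorial_restrict spinorial_if_cyclic_restrictions_spinorial[OF assms(1)] by metis
qed

end
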